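(* Let $X$ be a complex manifold of dimension $n$, $\chi$ a positive definite $(1,1)$-form, $\omega$ a real $(1,1)$-form, and $\theta\in(0,\pi)$. (a) If $\omega\in\Gamma_{\chi,\theta}$, then there exists $C>0$ depending only on $\theta,n$ such that $C\,(\omega-\cot(\theta)\chi+\chi)^n\ge G^n_\theta(\omega,\chi)$. (b) If $\omega\in\Gamma_{\chi,\theta-\delta}$ for some $\delta\in(0,\theta)$, then, with $\Omega:=\omega-\cot(\theta)\chi$, there exists $\epsilon>0$ depending only on $\theta,n,\delta$ such that $P^k_\theta(\Omega,\chi)\ge\epsilon\,\Omega^k$ for $k=1,\dots,n-1$.
   Context: For real $(1,1)$-forms $\alpha,\beta$ and integers $k\ge0$: $G^k_\theta(\alpha,\beta):=\mathrm{Re}(\alpha+\sqrt{-1}\beta)^k-\cot(\theta)\,\mathrm{Im}(\alpha+\sqrt{-1}\beta)^k$ (wedge powers) and $P^k_\theta(\alpha,\beta):=G^k_\theta(\alpha+\cot(\theta)\beta,\beta)$. Inequalities between real $(k,k)$-forms mean that the difference is a positive $(k,k)$-form in the sense of Demailly (for these polynomial expressions in two real $(1,1)$-forms, one of them positive, strong and weak positivity coincide; for $(n,n)$-forms it means a nonnegative density). For eigenvalues $\lambda_i$ of $\omega$ with respect to $\chi$ and $\mathrm{arccot}$ valued in $(0,\pi)$, $\omega\in\Gamma_{\chi,\theta}$ means $\sum_{i\in I}\mathrm{arccot}(\lambda_i)<\theta$ for every $I$ with $|I|=n-1$, pointwise. *)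

theory Defs
  imports Complex_Main
begin

text \<open>Pointwise model. At a point of an n-dimensional complex manifold we use
 holomorphic coordinates z_0,...,z_{n-1}. A complex (k,k)-form is represented by its
 coefficient function on pairs (I,J) of k-subsets of {0..<n}, with respect to the basis
 e_{I,J} = sigma_k dz_I wedge dzbar_J, sigma_k = i^k (-1)^(k(k-1)/2), indices increasing.
 For (1,1)-forms e_{i,j} = i dz_i wedge dzbar_j, and e_{[n],[n]} is the standard
 positive volume form.\<close>

type_synonym form = "nat set \<Rightarrow> nat set \<Rightarrow> complex"

text \<open>Sign of the shuffle: dz_I wedge dz_K = shuffle_sign I K * dz_{I union K}.\<close>
definition shuffle_sign :: "nat set \<Rightarrow> nat set \<Rightarrow> complex" where
  "shuffle_sign I K = (-1) ^ card {(i, k). i \<in> I \<and> k \<in> K \<and> k < i}"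

text \<open>Wedge product (on forms of even bidegree (p,p),(q,q)):
  e_{I,J} wedge e_{K,L} = shuffle_sign I K * shuffle_sign J L * e_{I union K, J union L}.\<close>
definition wedge :: "form \<Rightarrow> form \<Rightarrow> form" where
  "wedge u v M N = (\<Sum>I\<in>Pow M. \<Sum>J\<in>Pow N.
      shuffle_sign I (M - I) * shuffle_sign J (N - J) * u I J * v (M - I) (N - J))"

definition form_one :: form where
  "form_one I J = (if I = {} \<and> J = {} then 1 else 0)"

primrec form_pow :: "form \<Rightarrow> nat \<Rightarrow> form" where
  "form_pow u 0 = form_one"
| "form_pow u (Suc k) = wedge u (form_pow u k)"

text \<open>The (1,1)-form sum_{i,j<n} A i j * (i dz_i wedge dzbar_j).\<close>
definition form11 :: "nat \<Rightarrow> (nat \<Rightarrow> nat \<Rightarrow> complex) \<Rightarrow> form" where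
  "form11 n A I J = (if card I = 1 \<and> card J = 1 \<and> I \<subseteq> {..<n} \<and> J \<subseteq> {..<n}
      then A (the_elem I) (the_elem J) else 0)"

definition form_add :: "form \<Rightarrow> form \<Rightarrow> form" where
  "form_add u v = (\<lambda>I J. u I J + v I J)"

definition form_diff :: "form \<Rightarrow> form \<Rightarrow> form" where
  "form_diff u v = (\<lambda>I J. u I J - v I J)"

definition form_scale :: "complex \<Rightarrow> form \<Rightarrow> form" where
  "form_scale c u = (\<lambda>I J. c * u I J)"

text \<open>Complex conjugation of forms: conj(e_{I,J}) = e_{J,I}.\<close>
definition form_cnj :: "form \<Rightarrow> form" where
  "form_cnj u = (\<lambda>I J. cnj (u J I))"

definition form_Re :: "form \<Rightarrow> form" where
  "form_Re u = form_scale (1/2) (form_add u (form_cnj u))"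

definition form_Im :: "form \<Rightarrow> form" where
  "form_Im u = form_scale (1/(2*\<i>)) (form_diff u (form_cnj u))"

definition G_form :: "real \<Rightarrow> nat \<Rightarrow> form \<Rightarrow> form \<Rightarrow> form" where
  "G_form \<theta> k \<alpha> \<beta> =
     (let F = form_pow (form_add \<alpha> (form_scale \<i> \<beta>)) k
      in form_diff (form_Re F) (form_scale (of_real (cot \<theta>)) (form_Im F)))"

definition P_form :: "real \<Rightarrow> nat \<Rightarrow> form \<Rightarrow> form \<Rightarrow> form" where
  "P_form \<theta> k \<alpha> \<beta> = G_form \<theta> k (form_add \<alpha> (form_scale (of_real (cot \<theta>)) \<beta>)) \<beta>"

text \<open>Positivity (Demailly): a (k,k)-form u on C^n is positive iff
 u wedge (i a_1 wedge conj a_1) wedge ... wedge (i a_{n-k} wedge conj a_{n-k})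
 is a nonnegative multiple of the volume form for all (1,0)-forms a_j = sum_i a_j i dz_i.\<close>
definition pos_form :: "nat \<Rightarrow> nat \<Rightarrow> form \<Rightarrow> bool" where
  "pos_form n k u \<longleftrightarrow> (\<forall>as :: (nat \<Rightarrow> complex) list. length as = n - k \<longrightarrow>
     (let w = wedge u (foldr (\<lambda>a acc. wedge (form11 n (\<lambda>i j. a i * cnj (a j))) acc) as form_one)
                {..<n} {..<n}
      in Im w = 0 \<and> 0 \<le> Re w))"

definition form_ge :: "nat \<Rightarrow> nat \<Rightarrow> form \<Rightarrow> form \<Rightarrow> bool" where
  "form_ge n k u v \<longleftrightarrow> pos_form n k (form_diff u v)"

text \<open>Real (1,1)-forms correspond to hermitian coefficient matrices.\<close>
definition hermitian :: "nat \<Rightarrow> (nat \<Rightarrow> nat \<Rightarrow> complex) \<Rightarrow> bool" where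
  "hermitian n A \<longleftrightarrow> (\<forall>i<n. \<forall>j<n. A i j = cnj (A j i))"

definition posdef :: "nat \<Rightarrow> (nat \<Rightarrow> nat \<Rightarrow> complex) \<Rightarrow> bool" where
  "posdef n A \<longleftrightarrow> hermitian n A \<and>
     (\<forall>v :: nat \<Rightarrow> complex. (\<exists>i<n. v i \<noteq> 0) \<longrightarrow>
        0 < Re (\<Sum>i<n. \<Sum>j<n. A i j * v i * cnj (v j)))"

text \<open>lam are the eigenvalues of omega w.r.t. chi: simultaneous diagonalization
 (change of basis P) with chi becoming the identity and omega becoming diag(lam).\<close>
definition gen_eigenvalues :: "nat \<Rightarrow> (nat \<Rightarrow> nat \<Rightarrow> complex) \<Rightarrow> (nat \<Rightarrow> nat \<Rightarrow> complex)
    \<Rightarrow> (nat \<Rightarrow> real) \<Rightarrow> bool" where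
  "gen_eigenvalues n chi omega lam \<longleftrightarrow> (\<exists>P :: nat \<Rightarrow> nat \<Rightarrow> complex.
     (\<forall>i<n. \<forall>j<n. (\<Sum>a<n. \<Sum>b<n. P a i * chi a b * cnj (P b j)) = (if i = j then 1 else 0)) \<and>
     (\<forall>i<n. \<forall>j<n. (\<Sum>a<n. \<Sum>b<n. P a i * omega a b * cnj (P b j)) =
                    (if i = j then of_real (lam i) else 0)))"

text \<open>arccot with values in (0, pi).\<close>
definition arccot :: "real \<Rightarrow> real" where
  "arccot x = pi / 2 - arctan x"

definition in_Gamma :: "nat \<Rightarrow> (nat \<Rightarrow> nat \<Rightarrow> complex) \<Rightarrow> (nat \<Rightarrow> nat \<Rightarrow> complex) \<Rightarrow> real \<Rightarrow> bool" where
  "in_Gamma n chi omega \<theta> \<longleftrightarrow> (\<exists>lam. gen_eigenvalues n chi omega lam \<and>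
     (\<forall>I \<subseteq> {..<n}. card I = n - 1 \<longrightarrow> (\<Sum>i\<in>I. arccot (lam i)) < \<theta>))"

end

(*
  Everything is pointwise linear algebra. Diagonalising chi and omega simultaneously,
  chi = sum_j i rho_j \<and> conj rho_j and omega = sum_j lam_j i rho_j \<and> conj rho_j for a coframe
  rho, so all forms in the statement are combinations of the positive forms
  rho_J \<and> conj rho_J, J a multi-index. The coefficient of G^k_theta on rho_J is
  Re - cot(theta) Im of prod_{j in J} (lam_j + i), which equals
  sin(theta - sum_J arccot lam_j) / (sin theta * prod_J sin(arccot lam_j)), and the coefficients
  of the powers are products of the lam_j - cot theta (+ 1 in (a)). Both claims thus reduce to
  inequalities between real numbers, which follow from
  cot a - cot theta = sin(theta - a) / (sin a sin theta) and the cone condition: the arccot lam_j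
  over n - 1 indices sum to less than theta, resp. theta - delta.
*)
theory Submission
  imports Defs "Jordan_Normal_Form.Determinant"
begin

section \<open>Decomposable forms\<close>

text \<open>A \<open>(p,0)\<close>-form \<open>\<Sum>\<^sub>I h I dz\<^sub>I\<close>, indexed by sets like \<open>form\<close>.\<close>
type_synonym pform = "nat set \<Rightarrow> complex"

definition pwedge :: "pform \<Rightarrow> pform \<Rightarrow> pform" where
  "pwedge h g M = (\<Sum>I\<in>Pow M. shuffle_sign I (M - I) * h I * g (M - I))"

definition pform_one :: pform where
  "pform_one I = (if I = {} then 1 else 0)"

definition pform1 :: "nat \<Rightarrow> (nat \<Rightarrow> complex) \<Rightarrow> pform" where
  "pform1 n a I = (if card I = 1 \<and> I \<subseteq> {..<n} then a (the_elem I) else 0)"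

definition pform_deg1 :: "pform \<Rightarrow> bool" where
  "pform_deg1 h \<longleftrightarrow> (\<forall>I. card I \<noteq> 1 \<longrightarrow> h I = 0)"

text \<open>With the normalisation \<open>\<sigma>\<^sub>p\<close> of the basis of \<open>(p,p)\<close>-forms, \<open>form_sq h\<close> is the
  positive form \<open>\<sigma>\<^sub>p h \<and> conj h\<close>.\<close>
definition form_sq :: "pform \<Rightarrow> form" where
  "form_sq h I J = h I * cnj (h J)"

lemma cnj_shuffle_sign [simp]: "cnj (shuffle_sign I K) = shuffle_sign I K"
  by (simp add: shuffle_sign_def)

lemma wedge_form_sq: "wedge (form_sq h) (form_sq g) = form_sq (pwedge h g)"
  unfolding wedge_def form_sq_def pwedge_def
  by (simp add: fun_eq_iff sum_product cnj_sum mult_ac)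

lemma form_one_eq_form_sq: "form_one = form_sq pform_one"
  by (auto simp: form_one_def form_sq_def pform_one_def intro!: ext)

lemma form11_rank_one_eq_form_sq: "form11 n (\<lambda>i j. a i * cnj (a j)) = form_sq (pform1 n a)"
  by (auto simp: form11_def form_sq_def pform1_def intro!: ext)

lemma wedge_sum_left:
  "wedge (\<lambda>I J. \<Sum>x\<in>X. c x * u x I J) v M N = (\<Sum>x\<in>X. c x * wedge (u x) v M N)"
  unfolding wedge_def sum_distrib_left sum_distrib_right
  by (subst sum.swap, subst (2) sum.swap) (simp add: mult_ac)

lemma wedge_sum_right:
  "wedge v (\<lambda>I J. \<Sum>x\<in>X. c x * u x I J) M N = (\<Sum>x\<in>X. c x * wedge v (u x) M N)"
  unfolding wedge_def sum_distrib_left sum_distrib_right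
  by (subst sum.swap, subst (2) sum.swap) (simp add: mult_ac)

lemma shuffle_sign_singleton: "shuffle_sign {i} K = (-1) ^ card {k\<in>K. k < i}"
proof -
  have "{(a, k). a \<in> {i} \<and> k \<in> K \<and> k < a} = Pair i ` {k\<in>K. k < i}" by auto
  then show ?thesis by (simp add: shuffle_sign_def card_image inj_on_def)
qed

lemma shuffle_sign_singleton_insert:
  assumes "j \<notin> K"
  shows "shuffle_sign {i} (insert j K) = (if j < i then -1 else 1) * shuffle_sign {i} K"
proof -
  have "{k\<in>insert j K. k < i} = (if j < i then insert j {k\<in>K. k < i} else {k\<in>K. k < i})"
    by auto
  then show ?thesis using assms by (simp add: shuffle_sign_singleton)
qed

lemma pwedge_deg1:
  assumes "pform_deg1 h"
  shows "pwedge h g M = (\<Sum>i\<in>M. shuffle_sign {i} (M - {i}) * h {i} * g (M - {i}))"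
proof (cases "finite M")
  case True
  have "pwedge h g M = (\<Sum>I\<in>(\<lambda>i. {i}) ` M. shuffle_sign I (M - I) * h I * g (M - I))"
    unfolding pwedge_def using True assms
    by (intro sum.mono_neutral_right) (auto simp: pform_deg1_def card_1_singleton_iff)
  also have "\<dots> = (\<Sum>i\<in>M. shuffle_sign {i} (M - {i}) * h {i} * g (M - {i}))"
    by (simp add: sum.reindex)
  finally show ?thesis .
qed (simp add: pwedge_def)

text \<open>Exchanging \<open>i\<close> and \<open>j\<close> flips exactly one of the two shuffle signs.\<close>
lemma pwedge_anticomm:
  assumes "pform_deg1 a" "pform_deg1 b"
  shows "pwedge a (pwedge b g) M = - pwedge b (pwedge a g) M"
proof -
  define F where "F a b i j = shuffle_sign {i} (M - {i}) * shuffle_sign {j} (M - {i} - {j})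
    * a {i} * b {j} * g (M - {i} - {j})" for a b :: pform and i j
  have swap: "F a b i j = - F b a j i" if "i \<in> M" "j \<in> M" "i \<noteq> j" for i j
  proof -
    have "M - {i} = insert j (M - {i} - {j})" "M - {j} = insert i (M - {i} - {j})"
      using that by auto
    then have "shuffle_sign {i} (M - {i}) = (if j < i then -1 else 1) * shuffle_sign {i} (M - {i} - {j})"
      "shuffle_sign {j} (M - {j}) = (if i < j then -1 else 1) * shuffle_sign {j} (M - {i} - {j})"
      by (metis Diff_iff insertI1 shuffle_sign_singleton_insert)+
    moreover have "M - {j} - {i} = M - {i} - {j}" by auto
    ultimately show ?thesis
      using that by (cases "i < j") (auto simp: F_def)
  qed
  have expand: "pwedge a (pwedge b g) M = (\<Sum>i\<in>M. \<Sum>j\<in>M. if j \<noteq> i then F a b i j else 0)"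
    if "pform_deg1 a" "pform_deg1 b" for a b
  proof (cases "finite M")
    case True
    have "pwedge a (pwedge b g) M = (\<Sum>i\<in>M. \<Sum>j\<in>M - {i}. F a b i j)"
      using that by (simp add: pwedge_deg1 F_def sum_distrib_left mult_ac)
    also have "\<dots> = (\<Sum>i\<in>M. \<Sum>j\<in>M. if j \<noteq> i then F a b i j else 0)"
      using True by (simp add: sum.inter_filter set_diff_eq conj_commute)
    finally show ?thesis .
  qed (simp add: pwedge_def)
  have "pwedge a (pwedge b g) M = (\<Sum>i\<in>M. \<Sum>j\<in>M. if j \<noteq> i then F a b i j else 0)"
    using assms by (rule expand)
  also have "\<dots> = (\<Sum>j\<in>M. \<Sum>i\<in>M. if i \<noteq> j then - F b a j i else 0)"
    by (subst sum.swap) (intro sum.cong refl, auto simp: swap)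
  also have "\<dots> = - (\<Sum>j\<in>M. \<Sum>i\<in>M. if i \<noteq> j then F b a j i else 0)"
    by (simp add: sum_negf[symmetric] if_distrib[of uminus] cong: if_cong)
  also have "\<dots> = - pwedge b (pwedge a g) M"
    using assms by (simp add: expand)
  finally show ?thesis .
qed

lemma pwedge_self: "pform_deg1 a \<Longrightarrow> pwedge a (pwedge a g) = (\<lambda>_. 0)"
  using pwedge_anticomm[of a a g] by (auto simp: fun_eq_iff)

lemma pwedge_zero_right [simp]: "pwedge a (\<lambda>_. 0) = (\<lambda>_. 0)"
  and pwedge_zero_left [simp]: "pwedge (\<lambda>_. 0) a = (\<lambda>_. 0)"
  by (simp_all add: pwedge_def fun_eq_iff)

primrec pwedge_list :: "(nat \<Rightarrow> pform) \<Rightarrow> nat list \<Rightarrow> pform" where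
  "pwedge_list \<rho> [] = pform_one"
| "pwedge_list \<rho> (x # xs) = pwedge (\<rho> x) (pwedge_list \<rho> xs)"

lemma pwedge_list_member:
  assumes "\<And>j. pform_deg1 (\<rho> j)" "x \<in> set xs"
  shows "pwedge (\<rho> x) (pwedge_list \<rho> xs) = (\<lambda>_. 0)"
  using assms(2)
proof (induction xs)
  case (Cons y xs)
  show ?case
  proof (cases "x = y")
    case True
    then show ?thesis by (simp add: pwedge_self assms(1))
  next
    case False
    then have "pwedge (\<rho> x) (pwedge_list \<rho> xs) = (\<lambda>_. 0)"
      using Cons by simp
    show ?thesis
    proof
      fix M
      have "pwedge (\<rho> x) (pwedge (\<rho> y) (pwedge_list \<rho> xs)) M
          = - pwedge (\<rho> y) (pwedge (\<rho> x) (pwedge_list \<rho> xs)) M"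
        by (rule pwedge_anticomm[OF assms(1) assms(1)])
      then show "pwedge (\<rho> x) (pwedge_list \<rho> (y # xs)) M = 0"
        using \<open>pwedge (\<rho> x) (pwedge_list \<rho> xs) = (\<lambda>_. 0)\<close> by simp
    qed
  qed
qed simp

lemma pwedge_list_not_distinct:
  assumes "\<And>j. pform_deg1 (\<rho> j)" "\<not> distinct xs"
  shows "pwedge_list \<rho> xs = (\<lambda>_. 0)"
  using assms(2) by (induction xs) (auto simp: pwedge_list_member assms(1))

section \<open>Forms that are diagonal in a coframe\<close>

definition diag_form :: "(nat \<Rightarrow> pform) \<Rightarrow> nat \<Rightarrow> (nat \<Rightarrow> complex) \<Rightarrow> form" where
  "diag_form \<rho> n \<mu> I J = (\<Sum>j<n. \<mu> j * form_sq (\<rho> j) I J)"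

definition list_form :: "(nat \<Rightarrow> pform) \<Rightarrow> nat list set \<Rightarrow> (nat list \<Rightarrow> complex) \<Rightarrow> form" where
  "list_form \<rho> X c I J = (\<Sum>xs\<in>X. c xs * form_sq (pwedge_list \<rho> xs) I J)"

definition index_lists :: "nat \<Rightarrow> nat \<Rightarrow> nat list set" where
  "index_lists n k = {xs. set xs \<subseteq> {..<n} \<and> length xs = k}"

lemma finite_index_lists [simp]: "finite (index_lists n k)"
  unfolding index_lists_def by (rule finite_lists_length_eq) simp

lemma index_lists_Suc: "index_lists n (Suc k) = (\<lambda>(xs, j). j # xs) ` (index_lists n k \<times> {..<n})"
  unfolding index_lists_def by (rule lists_length_Suc_eq)

lemma form_pow_diag_form:
  "form_pow (diag_form \<rho> n \<mu>) k = list_form \<rho> (index_lists n k) (\<lambda>xs. \<Prod>j\<leftarrow>xs. \<mu> j)"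
proof (induction k)
  case 0
  have "index_lists n 0 = {[]}" by (auto simp: index_lists_def)
  then show ?case by (simp add: list_form_def form_one_eq_form_sq fun_eq_iff)
next
  case (Suc k)
  show ?case
  proof (intro ext)
    fix M N
    have "form_pow (diag_form \<rho> n \<mu>) (Suc k) M N
        = wedge (diag_form \<rho> n \<mu>) (list_form \<rho> (index_lists n k) (\<lambda>xs. \<Prod>j\<leftarrow>xs. \<mu> j)) M N"
      by (simp add: Suc.IH)
    also have "\<dots> = (\<Sum>j<n. \<Sum>xs\<in>index_lists n k.
        (\<Prod>i\<leftarrow>j # xs. \<mu> i) * form_sq (pwedge_list \<rho> (j # xs)) M N)"
      unfolding diag_form_def list_form_def wedge_sum_left wedge_sum_right
      by (simp add: wedge_form_sq sum_distrib_left mult_ac)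
    also have "\<dots> = (\<Sum>(xs, j)\<in>index_lists n k \<times> {..<n}.
        (\<Prod>i\<leftarrow>j # xs. \<mu> i) * form_sq (pwedge_list \<rho> (j # xs)) M N)"
      by (subst sum.swap) (simp add: sum.cartesian_product)
    also have "\<dots> = list_form \<rho> (index_lists n (Suc k)) (\<lambda>xs. \<Prod>j\<leftarrow>xs. \<mu> j) M N"
      unfolding index_lists_Suc list_form_def
      by (subst sum.reindex) (auto simp: inj_on_def split_def)
    finally show "form_pow (diag_form \<rho> n \<mu>) (Suc k) M N
        = list_form \<rho> (index_lists n (Suc k)) (\<lambda>xs. \<Prod>j\<leftarrow>xs. \<mu> j) M N" .
  qed
qed

lemma form_add_list_form: "form_add (list_form \<rho> X a) (list_form \<rho> X b) = list_form \<rho> X (\<lambda>x. a x + b x)"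
  by (simp add: form_add_def list_form_def sum.distrib[symmetric] algebra_simps fun_eq_iff)

lemma form_diff_list_form: "form_diff (list_form \<rho> X a) (list_form \<rho> X b) = list_form \<rho> X (\<lambda>x. a x - b x)"
  by (simp add: form_diff_def list_form_def sum_subtractf[symmetric] algebra_simps fun_eq_iff)

lemma form_scale_list_form: "form_scale d (list_form \<rho> X a) = list_form \<rho> X (\<lambda>x. d * a x)"
  by (simp add: form_scale_def list_form_def sum_distrib_left mult_ac fun_eq_iff)

lemma form_cnj_list_form: "form_cnj (list_form \<rho> X c) = list_form \<rho> X (\<lambda>x. cnj (c x))"
  by (simp add: form_cnj_def list_form_def form_sq_def cnj_sum mult_ac fun_eq_iff)

lemma form_Re_list_form: "form_Re (list_form \<rho> X c) = list_form \<rho> X (\<lambda>x. of_real (Re (c x)))"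
  unfolding form_Re_def form_cnj_list_form form_add_list_form form_scale_list_form
  by (simp add: complex_add_cnj)

lemma form_Im_list_form: "form_Im (list_form \<rho> X c) = list_form \<rho> X (\<lambda>x. of_real (Im (c x)))"
proof -
  have "- (\<i> * (complex_of_real r * \<i>)) = complex_of_real r" for r
    by (simp add: complex_eq_iff)
  then show ?thesis
    unfolding form_Im_def form_cnj_list_form form_diff_list_form form_scale_list_form
    by (simp add: complex_diff_cnj)
qed

lemma form_add_diag_form: "form_add (diag_form \<rho> n a) (diag_form \<rho> n b) = diag_form \<rho> n (\<lambda>j. a j + b j)"
  by (simp add: form_add_def diag_form_def sum.distrib[symmetric] algebra_simps fun_eq_iff)

lemma form_scale_diag_form: "form_scale d (diag_form \<rho> n a) = diag_form \<rho> n (\<lambda>j. d * a j)"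
  by (simp add: form_scale_def diag_form_def sum_distrib_left mult_ac fun_eq_iff)

definition G_scalar :: "real \<Rightarrow> complex \<Rightarrow> real" where
  "G_scalar \<theta> z = Re z - cot \<theta> * Im z"

lemma G_form_diag_form:
  "G_form \<theta> k (diag_form \<rho> n \<mu>) (diag_form \<rho> n \<nu>)
     = list_form \<rho> (index_lists n k) (\<lambda>xs. of_real (G_scalar \<theta> (\<Prod>j\<leftarrow>xs. \<mu> j + \<i> * \<nu> j)))"
  unfolding G_form_def Let_def form_scale_diag_form form_add_diag_form form_pow_diag_form
    form_Re_list_form form_Im_list_form form_scale_list_form form_diff_list_form G_scalar_def
  by simp

lemma foldr_wedge_form11_eq_form_sq:
  "foldr (\<lambda>a acc. wedge (form11 n (\<lambda>i j. a i * cnj (a j))) acc) as form_one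
     = form_sq (foldr (\<lambda>a. pwedge (pform1 n a)) as pform_one)"
  by (induction as) (simp_all add: form_one_eq_form_sq form11_rank_one_eq_form_sq wedge_form_sq)

lemma wedge_list_form_form_sq:
  "wedge (list_form \<rho> X (\<lambda>xs. of_real (t xs))) (form_sq \<beta>) M M
     = of_real (\<Sum>xs\<in>X. t xs * (cmod (pwedge (pwedge_list \<rho> xs) \<beta> M))\<^sup>2)"
  unfolding list_form_def[abs_def] wedge_sum_left
  by (simp add: wedge_form_sq, simp add: form_sq_def flip: complex_norm_square)

text \<open>Coefficients on non-distinct index lists do not matter: those wedge products vanish.\<close>
lemma form_ge_list_form:
  assumes "finite X" "\<And>j. pform_deg1 (\<rho> j)"
    and "\<And>xs. xs \<in> X \<Longrightarrow> distinct xs \<Longrightarrow> s xs \<le> r xs"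
  shows "form_ge n k (list_form \<rho> X (\<lambda>xs. of_real (r xs))) (list_form \<rho> X (\<lambda>xs. of_real (s xs)))"
proof -
  have "0 \<le> (r xs - s xs) * (cmod (pwedge (pwedge_list \<rho> xs) \<beta> M))\<^sup>2" if "xs \<in> X" for xs \<beta> M
    using assms(3)[OF that] pwedge_list_not_distinct[OF assms(2)] by (cases "distinct xs") auto
  then show ?thesis
    unfolding form_ge_def pos_form_def form_diff_list_form foldr_wedge_form11_eq_form_sq
      of_real_diff[symmetric] wedge_list_form_form_sq Let_def
    by (simp add: sum_nonneg)
qed

section \<open>Simultaneous diagonalisation\<close>

definition mat_adj :: "complex mat \<Rightarrow> complex mat" where
  "mat_adj A = map_mat cnj (transpose_mat A)"

lemma mat_adj_dim [simp]: "dim_row (mat_adj A) = dim_col A" "dim_col (mat_adj A) = dim_row A"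
  by (simp_all add: mat_adj_def)

lemma mat_adj_carrier [simp]: "A \<in> carrier_mat n m \<Longrightarrow> mat_adj A \<in> carrier_mat m n"
  by (simp add: mat_adj_def)

lemma mat_adj_mult:
  assumes "A \<in> carrier_mat n k" "B \<in> carrier_mat k m"
  shows "mat_adj (A * B) = mat_adj B * mat_adj A"
  using assms by (intro eq_matI) (auto simp: mat_adj_def scalar_prod_def cnj_sum mult.commute)

lemma mat_adj_one [simp]: "mat_adj (1\<^sub>m n) = 1\<^sub>m n"
  by (intro eq_matI) (auto simp: mat_adj_def)

lemma index_mult_mat_adj:
  assumes "A \<in> carrier_mat n n" "Y \<in> carrier_mat n n" "B \<in> carrier_mat n n" "i < n" "j < n"
  shows "(A * Y * mat_adj B) $$ (i, j) = (\<Sum>a<n. \<Sum>b<n. A $$ (i, a) * Y $$ (a, b) * cnj (B $$ (j, b)))"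
  using assms
  by (simp add: mat_adj_def scalar_prod_def atLeast0LessThan sum_distrib_left mult_ac)

text \<open>\<open>R = X A\<^sup>*\<close> is a right, hence two-sided, inverse of \<open>A\<close>.\<close>
lemma congruence_inverse:
  fixes A X :: "complex mat"
  assumes A: "A \<in> carrier_mat n n" and X: "X \<in> carrier_mat n n" and AX: "A * X * mat_adj A = 1\<^sub>m n"
  obtains R where "R \<in> carrier_mat n n"
    "\<And>Y. Y \<in> carrier_mat n n \<Longrightarrow> R * (A * Y * mat_adj A) * mat_adj R = Y"
proof
  define R where "R = X * mat_adj A"
  show R: "R \<in> carrier_mat n n" using A X by (simp add: R_def)
  have "A * R = 1\<^sub>m n" using A X AX by (simp add: R_def assoc_mult_mat[of A n n X n "mat_adj A" n])
  then have RA: "R * A = 1\<^sub>m n" by (rule mat_mult_left_right_inverse[OF A R])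
  then have AR: "mat_adj A * mat_adj R = 1\<^sub>m n"
    using A R by (metis mat_adj_mult mat_adj_one)
  fix Y :: "complex mat" assume Y: "Y \<in> carrier_mat n n"
  have "R * (A * Y * mat_adj A) * mat_adj R = (R * A) * Y * (mat_adj A * mat_adj R)"
    using A R Y by (smt (verit, best) assoc_mult_mat mat_adj_carrier mult_carrier_mat)
  then show "R * (A * Y * mat_adj A) * mat_adj R = Y" using Y by (simp add: RA AR)
qed

lemma gen_eigenvalues_factor:
  assumes "gen_eigenvalues n chi omega lam"
  obtains R where "\<forall>a<n. \<forall>b<n. chi a b = (\<Sum>j<n. R a j * cnj (R b j))"
    "\<forall>a<n. \<forall>b<n. omega a b = (\<Sum>j<n. of_real (lam j) * R a j * cnj (R b j))"
proof -
  obtain P where P1: "\<forall>i<n. \<forall>j<n. (\<Sum>a<n. \<Sum>b<n. P a i * chi a b * cnj (P b j)) = (if i = j then 1 else 0)"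
    and P\<omega>: "\<forall>i<n. \<forall>j<n. (\<Sum>a<n. \<Sum>b<n. P a i * omega a b * cnj (P b j)) = (if i = j then of_real (lam i) else 0)"
    using assms unfolding gen_eigenvalues_def by blast
  define A where "A = mat n n (\<lambda>(i, a). P a i)"
  define X where "X = mat n n (\<lambda>(a, b). chi a b)"
  define W where "W = mat n n (\<lambda>(a, b). omega a b)"
  define D where "D = mat n n (\<lambda>(i, j). if i = j then complex_of_real (lam i) else 0)"
  have carrier: "A \<in> carrier_mat n n" "X \<in> carrier_mat n n" "W \<in> carrier_mat n n" "D \<in> carrier_mat n n"
    by (simp_all add: A_def X_def W_def D_def)
  have entry: "(A * Y * mat_adj A) $$ (i, j) = (\<Sum>a<n. \<Sum>b<n. P a i * Y $$ (a, b) * cnj (P b j))"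
    if "Y \<in> carrier_mat n n" "i < n" "j < n" for Y i j
    using index_mult_mat_adj[OF carrier(1) that(1) carrier(1) that(2,3)] that by (simp add: A_def)
  have "A * X * mat_adj A = 1\<^sub>m n"
    using carrier P1 by (intro eq_matI) (simp_all add: entry X_def del: index_mult_mat(1))
  moreover have "A * W * mat_adj A = D"
    using carrier P\<omega> by (intro eq_matI) (simp_all add: entry W_def D_def del: index_mult_mat(1))
  ultimately obtain R where R: "R \<in> carrier_mat n n" "X = R * 1\<^sub>m n * mat_adj R" "W = R * D * mat_adj R"
    using congruence_inverse[OF carrier(1,2)] carrier by metis
  show ?thesis
  proof
    show "\<forall>a<n. \<forall>b<n. chi a b = (\<Sum>j<n. R $$ (a, j) * cnj (R $$ (b, j)))"
    proof (intro allI impI)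
      fix a b assume "a < n" "b < n"
      then have "chi a b = (R * 1\<^sub>m n * mat_adj R) $$ (a, b)" by (simp add: X_def flip: R(2))
      also have "\<dots> = (\<Sum>j<n. R $$ (a, j) * cnj (R $$ (b, j)))"
        using \<open>a < n\<close> \<open>b < n\<close> R(1) by (simp add: mat_adj_def scalar_prod_def atLeast0LessThan)
      finally show "chi a b = (\<Sum>j<n. R $$ (a, j) * cnj (R $$ (b, j)))" .
    qed
    show "\<forall>a<n. \<forall>b<n. omega a b = (\<Sum>j<n. of_real (lam j) * R $$ (a, j) * cnj (R $$ (b, j)))"
    proof (intro allI impI)
      fix a b assume "a < n" "b < n"
      then have "omega a b = (R * D * mat_adj R) $$ (a, b)" by (simp add: W_def flip: R(3))
      also have "\<dots> = (\<Sum>j<n. of_real (lam j) * R $$ (a, j) * cnj (R $$ (b, j)))"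
        using \<open>a < n\<close> \<open>b < n\<close> R(1) carrier(4)
        by (simp add: index_mult_mat_adj D_def if_distrib[of "\<lambda>x. _ * x"] sum.delta' mult_ac
            del: index_mult_mat(1) cong: if_cong)
      finally show "omega a b = (\<Sum>j<n. of_real (lam j) * R $$ (a, j) * cnj (R $$ (b, j)))" .
    qed
  qed
qed

definition coframe :: "nat \<Rightarrow> (nat \<Rightarrow> nat \<Rightarrow> complex) \<Rightarrow> nat \<Rightarrow> pform" where
  "coframe n R j = pform1 n (\<lambda>a. R a j)"

lemma pform_deg1_coframe: "pform_deg1 (coframe n R j)"
  by (simp add: coframe_def pform_deg1_def pform1_def)

lemma form11_eq_diag_form:
  assumes "\<forall>a<n. \<forall>b<n. A a b = (\<Sum>j<n. of_real (m j) * R a j * cnj (R b j))"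
  shows "form11 n A = diag_form (coframe n R) n (\<lambda>j. of_real (m j))"
proof (intro ext)
  fix I J
  show "form11 n A I J = diag_form (coframe n R) n (\<lambda>j. of_real (m j)) I J"
  proof (cases "card I = 1 \<and> card J = 1 \<and> I \<subseteq> {..<n} \<and> J \<subseteq> {..<n}")
    case True
    then obtain a b where "I = {a}" "J = {b}" "a < n" "b < n"
      by (auto simp: card_1_singleton_iff)
    then show ?thesis
      using assms by (simp add: form11_def diag_form_def form_sq_def coframe_def pform1_def mult.assoc)
  next
    case False
    then have "form_sq (coframe n R j) I J = 0" for j
      by (auto simp: form_sq_def coframe_def pform1_def)
    then show ?thesis
      using False by (auto simp: form11_def diag_form_def)
  qed
qed

section \<open>The scalar inequalities\<close>

lemma cot_arccot [simp]: "cot (arccot x) = x"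
proof -
  have "cot (pi / 2 - y) = tan y" for y :: real
    by (simp add: cot_def tan_def cos_diff sin_diff)
  then show ?thesis by (simp add: arccot_def tan_arctan)
qed

lemma arccot_pos: "0 < arccot x"
  unfolding arccot_def using arctan_bounded[of x] by auto

lemma cot_diff: "sin a \<noteq> 0 \<Longrightarrow> sin t \<noteq> 0 \<Longrightarrow> cot a - cot t = sin (t - a) / (sin a * sin t)"
  by (simp add: cot_def sin_diff field_simps)

lemma cis_sum: "finite S \<Longrightarrow> cis (\<Sum>j\<in>S. a j) = (\<Prod>j\<in>S. cis (a j))"
  by (induction S rule: finite_induct) (simp_all add: cis_mult[symmetric])

text \<open>Since \<open>cot a + \<i> = cis a / sin a\<close>, the product is \<open>cis (\<Sum>a) / \<Prod> sin a\<close>.\<close>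
lemma G_scalar_prod_cot:
  assumes "finite S" "\<And>j. j \<in> S \<Longrightarrow> 0 < sin (a j)" "0 < sin \<theta>"
  shows "G_scalar \<theta> (\<Prod>j\<in>S. of_real (cot (a j)) + \<i>)
    = sin (\<theta> - (\<Sum>j\<in>S. a j)) / (sin \<theta> * (\<Prod>j\<in>S. sin (a j)))"
proof -
  let ?A = "\<Sum>j\<in>S. a j" and ?P = "\<Prod>j\<in>S. sin (a j)"
  have "0 < ?P" using assms(2) by (rule prod_pos)
  have "sin (a j) \<noteq> 0" if "j \<in> S" for j
    using assms(2)[OF that] by simp
  then have "(\<Prod>j\<in>S. of_real (cot (a j)) + \<i>) = (\<Prod>j\<in>S. cis (a j) / of_real (sin (a j)))"
    by (intro prod.cong refl) (simp add: complex_eq_iff cot_def)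
  also have "\<dots> = cis ?A / of_real ?P"
    using assms(1) by (simp add: prod_dividef cis_sum)
  finally have prod: "(\<Prod>j\<in>S. of_real (cot (a j)) + \<i>) = cis ?A / of_real ?P" .
  have "G_scalar \<theta> (cis ?A / of_real ?P) = (cos ?A - cot \<theta> * sin ?A) / ?P"
    by (simp add: G_scalar_def diff_divide_distrib del: of_real_prod)
  also have "\<dots> = sin (\<theta> - ?A) / (sin \<theta> * ?P)"
    using \<open>0 < ?P\<close> assms(3) by (simp add: cot_def sin_diff field_simps)
  finally show ?thesis unfolding prod .
qed

lemma sin_sq_le_sin_diff_add:
  assumes "0 < a" "a < t" "t < pi"
  shows "sin t ^ 2 \<le> sin (t - a) + sin a * sin t"
proof -
  have pos: "0 < sin (t - a)" "0 < sin a" "0 < sin t"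
    using assms by (auto intro!: sin_gt_zero)
  have "sin t = sin (t - a) * cos a + cos (t - a) * sin a"
    using sin_add[of "t - a" a] by simp
  also have "\<dots> \<le> sin (t - a) + sin a"
    using pos by (intro add_mono) (auto intro: mult_left_le mult_left_le_one_le)
  finally have "sin t * sin t \<le> sin t * (sin (t - a) + sin a)"
    using pos by (intro mult_left_mono) auto
  also have "\<dots> \<le> sin (t - a) + sin a * sin t"
    using pos sin_le_one[of t] by (simp add: algebra_simps mult_left_le_one_le)
  finally show ?thesis by (simp add: power2_eq_square)
qed

lemma sin_ge_min:
  assumes "0 < d" "d \<le> t" "t \<le> u" "u < pi"
  shows "min (sin d) (sin u) \<le> sin t"
proof (cases "t \<le> pi / 2")
  case True
  then have "sin d \<le> sin t" using assms by (intro sin_monotone_2pi_le) auto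
  then show ?thesis by simp
next
  case False
  then have "sin (pi - u) \<le> sin (pi - t)" using assms by (intro sin_monotone_2pi_le) auto
  then show ?thesis by simp
qed

text \<open>Each factor \<open>cot a - cot \<theta> + 1 = (sin (\<theta> - a) + sin a sin \<theta>) / (sin a sin \<theta>)\<close> is at
  least \<open>sin \<theta> / sin a\<close>, while the numerator \<open>sin (\<theta> - \<Sum>a)\<close> is at most \<open>1\<close>.\<close>
lemma G_scalar_prod_cot_le:
  assumes "finite S" "0 < \<theta>" "\<theta> < pi" "\<And>j. j \<in> S \<Longrightarrow> 0 < a j \<and> a j < \<theta>"
  shows "G_scalar \<theta> (\<Prod>j\<in>S. of_real (cot (a j)) + \<i>)
    \<le> (\<Prod>j\<in>S. cot (a j) - cot \<theta> + 1) / sin \<theta> ^ (2 * card S + 1)"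
proof -
  define s where "s = sin \<theta>"
  define P where "P = (\<Prod>j\<in>S. sin (a j))"
  define B where "B = (\<Prod>j\<in>S. sin (\<theta> - a j) + sin (a j) * s)"
  have s: "0 < s" "s \<le> 1" using assms(2,3) by (auto simp: s_def intro: sin_gt_zero)
  have sa: "0 < sin (a j)" if "j \<in> S" for j
    using assms(3) assms(4)[OF that] by (intro sin_gt_zero) auto
  have P: "0 < P" unfolding P_def using sa by (rule prod_pos)
  have "(\<Prod>j\<in>S. cot (a j) - cot \<theta> + 1) = (\<Prod>j\<in>S. (sin (\<theta> - a j) + sin (a j) * s) / (sin (a j) * s))"
    using sa s by (intro prod.cong refl) (simp add: cot_diff s_def field_simps less_imp_neq[symmetric])
  also have "\<dots> = B / (P * s ^ card S)"
    by (simp add: prod_dividef prod.distrib B_def P_def)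
  finally have factors: "(\<Prod>j\<in>S. cot (a j) - cot \<theta> + 1) = B / (P * s ^ card S)" .
  have "s ^ (2 * card S) = (\<Prod>j\<in>S. s ^ 2)" by (simp add: power_mult)
  also have "\<dots> \<le> B"
    unfolding B_def s_def using assms(3,4) by (intro prod_mono) (auto intro: sin_sq_le_sin_diff_add)
  finally have B: "s ^ (2 * card S) \<le> B" .
  have "G_scalar \<theta> (\<Prod>j\<in>S. of_real (cot (a j)) + \<i>) = sin (\<theta> - sum a S) / (s * P)"
    using assms(1) sa s by (simp add: G_scalar_prod_cot s_def P_def)
  also have "\<dots> \<le> 1 / (s * P)"
    using s P by (intro divide_right_mono) auto
  also have "\<dots> \<le> 1 / (s * P * s ^ card S)"
    using s P by (intro divide_left_mono mult_left_le power_le_one) auto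
  also have "\<dots> = s ^ (2 * card S) / (P * s ^ card S) / s ^ (2 * card S + 1)"
    using s P by (simp add: field_simps power_add)
  also have "\<dots> \<le> B / (P * s ^ card S) / s ^ (2 * card S + 1)"
    using s P B by (intro divide_right_mono) auto
  finally show ?thesis unfolding factors s_def .
qed

text \<open>Now \<open>cot a - cot \<theta> = sin (\<theta> - a) / (sin a sin \<theta>) \<le> 1 / (sin a sin \<theta>)\<close>, while
  \<open>\<delta> < \<theta> - \<Sum>a < \<theta>\<close> bounds the numerator \<open>sin (\<theta> - \<Sum>a)\<close> from below.\<close>
lemma G_scalar_prod_cot_ge:
  assumes "finite S" "S \<noteq> {}" "card S \<le> n" "\<And>j. j \<in> S \<Longrightarrow> 0 < a j"
    and "(\<Sum>j\<in>S. a j) < \<theta> - \<delta>" "0 < \<delta>" "\<theta> < pi"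
  shows "min (sin \<delta>) (sin \<theta>) * sin \<theta> ^ n * (\<Prod>j\<in>S. cot (a j) - cot \<theta>)
    \<le> G_scalar \<theta> (\<Prod>j\<in>S. of_real (cot (a j)) + \<i>)"
proof -
  define s where "s = sin \<theta>"
  define A where "A = (\<Sum>j\<in>S. a j)"
  define P where "P = (\<Prod>j\<in>S. sin (a j))"
  define Q where "Q = (\<Prod>j\<in>S. sin (\<theta> - a j))"
  define m where "m = min (sin \<delta>) s"
  have "0 < A" unfolding A_def using assms(1,2,4) by (rule sum_pos)
  have s: "0 < s" "s \<le> 1"
    using \<open>0 < A\<close> assms(5-7) by (auto simp: s_def A_def intro: sin_gt_zero)
  have sa: "0 < sin (a j)" if "j \<in> S" for j
  proof -
    have "a j \<le> A"
      unfolding A_def using assms(1,4) that by (intro member_le_sum) (auto intro: less_imp_le)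
    then show ?thesis using assms(4)[OF that] assms(5-7) by (intro sin_gt_zero) (auto simp: A_def)
  qed
  have P: "0 < P" unfolding P_def using sa by (rule prod_pos)
  have m: "0 < m" "m \<le> sin (\<theta> - A)"
    using s assms(5-7) \<open>0 < A\<close> by (auto simp: m_def s_def A_def intro: sin_gt_zero sin_ge_min)
  have "Q \<le> 1"
  proof -
    have "\<bar>Q\<bar> \<le> (\<Prod>j\<in>S. 1)" unfolding Q_def abs_prod by (intro prod_mono) auto
    then show ?thesis by simp
  qed
  have "(\<Prod>j\<in>S. cot (a j) - cot \<theta>) = (\<Prod>j\<in>S. sin (\<theta> - a j) / (sin (a j) * s))"
    using sa s by (intro prod.cong refl) (simp add: cot_diff s_def less_imp_neq[symmetric])
  also have "\<dots> = Q / (P * s ^ card S)"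
    by (simp add: prod_dividef prod.distrib Q_def P_def)
  finally have factors: "(\<Prod>j\<in>S. cot (a j) - cot \<theta>) = Q / (P * s ^ card S)" .
  have "card S \<ge> 1" using assms(1,2) by (simp add: Suc_le_eq card_gt_0_iff)
  then have pow: "s ^ card S = s * s ^ (card S - 1)" by (cases "card S") auto
  have "m * s ^ n * Q \<le> m * s ^ n"
    using \<open>Q \<le> 1\<close> m s by (simp add: mult_left_le)
  also have "\<dots> \<le> sin (\<theta> - A) * s ^ (card S - 1)"
    using m s assms(3) by (intro mult_mono power_decreasing) auto
  finally have "m * s ^ n * (Q / (P * s ^ card S)) \<le> sin (\<theta> - A) * s ^ (card S - 1) / (P * s ^ card S)"
    using P s by (simp add: divide_right_mono)
  also have "\<dots> = sin (\<theta> - A) / (s * P)"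
    using P s unfolding pow by (simp add: field_simps)
  also have "\<dots> = G_scalar \<theta> (\<Prod>j\<in>S. of_real (cot (a j)) + \<i>)"
    using assms(1) sa s by (simp add: G_scalar_prod_cot s_def A_def P_def)
  finally show ?thesis unfolding factors m_def s_def .
qed

lemma arccot_sum_less:
  assumes "S \<subseteq> {..<n}" "card S \<le> n - 1"
    and "\<forall>I\<subseteq>{..<n}. card I = n - 1 \<longrightarrow> (\<Sum>i\<in>I. arccot (lam i)) < \<theta>"
  shows "(\<Sum>i\<in>S. arccot (lam i)) < \<theta>"
proof -
  obtain I where "S \<subseteq> I" "I \<subseteq> {..<n}" "card I = n - 1"
    using exists_subset_between[of S "n - 1" "{..<n}"] assms(1,2) by auto
  then have "(\<Sum>i\<in>S. arccot (lam i)) \<le> (\<Sum>i\<in>I. arccot (lam i))"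
    by (intro sum_mono2) (auto intro: finite_subset less_imp_le arccot_pos)
  also have "\<dots> < \<theta>" using assms(3) \<open>I \<subseteq> {..<n}\<close> \<open>card I = n - 1\<close> by blast
  finally show ?thesis .
qed

text \<open>For \<open>n = 1\<close> the cone condition is empty and \<open>G = \<lambda> - cot \<theta>\<close>, which forces \<open>C = 1\<close>.\<close>
lemma G_scalar_le_of_arccot_sums:
  assumes "0 < \<theta>" "\<theta> < pi"
    and "\<forall>I\<subseteq>{..<n}. card I = n - 1 \<longrightarrow> (\<Sum>i\<in>I. arccot (lam i)) < \<theta>"
  shows "G_scalar \<theta> (\<Prod>j<n. of_real (lam j) + \<i>)
    \<le> (if n \<le> 1 then 1 else 1 / sin \<theta> ^ (2 * n + 1)) * (\<Prod>j<n. lam j - cot \<theta> + 1)"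
proof (cases "n \<le> 1")
  case True
  then consider "n = 0" | "n = 1" by linarith
  then show ?thesis by cases (simp_all add: G_scalar_def)
next
  case False
  have "arccot (lam j) < \<theta>" if "j < n" for j
    using arccot_sum_less[of "{j}" n lam \<theta>] that False assms(3) by auto
  then have "G_scalar \<theta> (\<Prod>j<n. of_real (cot (arccot (lam j))) + \<i>)
      \<le> (\<Prod>j<n. cot (arccot (lam j)) - cot \<theta> + 1) / sin \<theta> ^ (2 * card {..<n} + 1)"
    using assms(1,2) by (intro G_scalar_prod_cot_le) (auto intro: arccot_pos)
  then show ?thesis using False by simp
qed

lemma G_scalar_ge_of_arccot_sums:
  assumes "0 < \<delta>" "\<theta> < pi" "S \<subseteq> {..<n}" "S \<noteq> {}" "card S \<le> n - 1"
    and "\<forall>I\<subseteq>{..<n}. card I = n - 1 \<longrightarrow> (\<Sum>i\<in>I. arccot (lam i)) < \<theta> - \<delta>"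
  shows "min (sin \<delta>) (sin \<theta>) * sin \<theta> ^ n * (\<Prod>j\<in>S. lam j - cot \<theta>)
    \<le> G_scalar \<theta> (\<Prod>j\<in>S. of_real (lam j) + \<i>)"
proof -
  have "finite S" using assms(3) finite_subset by blast
  have "min (sin \<delta>) (sin \<theta>) * sin \<theta> ^ n * (\<Prod>j\<in>S. cot (arccot (lam j)) - cot \<theta>)
      \<le> G_scalar \<theta> (\<Prod>j\<in>S. of_real (cot (arccot (lam j))) + \<i>)"
    using \<open>finite S\<close> assms arccot_sum_less[OF assms(3,5,6)] card_mono[OF _ assms(3)]
    by (intro G_scalar_prod_cot_ge) (auto intro: arccot_pos)
  then show ?thesis by simp
qed

lemma prod_list_map_of_real: "(\<Prod>x\<leftarrow>xs. of_real (f x)) = of_real (\<Prod>x\<leftarrow>xs. f x)"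
  by (induction xs) simp_all

lemma in_Gamma_diag_form:
  assumes "in_Gamma n chi omega \<theta>"
  obtains lam \<rho> where "\<forall>I\<subseteq>{..<n}. card I = n - 1 \<longrightarrow> (\<Sum>i\<in>I. arccot (lam i)) < \<theta>"
    "\<And>j. pform_deg1 (\<rho> j)"
    "form11 n chi = diag_form \<rho> n (\<lambda>j. 1)"
    "form11 n omega = diag_form \<rho> n (\<lambda>j. of_real (lam j))"
    "\<And>c. form11 n (\<lambda>i j. omega i j - of_real c * chi i j) = diag_form \<rho> n (\<lambda>j. of_real (lam j - c))"
    "\<And>c. form11 n (\<lambda>i j. omega i j - of_real c * chi i j + chi i j)
       = diag_form \<rho> n (\<lambda>j. of_real (lam j - c + 1))"
proof -
  obtain lam where gen: "gen_eigenvalues n chi omega lam"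
    and cone: "\<forall>I\<subseteq>{..<n}. card I = n - 1 \<longrightarrow> (\<Sum>i\<in>I. arccot (lam i)) < \<theta>"
    using assms unfolding in_Gamma_def by blast
  obtain R where \<chi>: "\<forall>a<n. \<forall>b<n. chi a b = (\<Sum>j<n. R a j * cnj (R b j))"
    and \<omega>: "\<forall>a<n. \<forall>b<n. omega a b = (\<Sum>j<n. of_real (lam j) * R a j * cnj (R b j))"
    using gen_eigenvalues_factor[OF gen] by blast
  show ?thesis
  proof (rule that[OF cone pform_deg1_coframe])
    show "form11 n chi = diag_form (coframe n R) n (\<lambda>j. 1)"
      using form11_eq_diag_form[of n chi "\<lambda>_. 1" R] \<chi> by simp
    show "form11 n omega = diag_form (coframe n R) n (\<lambda>j. of_real (lam j))"
      by (rule form11_eq_diag_form) (use \<omega> in simp)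
    show "form11 n (\<lambda>i j. omega i j - of_real c * chi i j) = diag_form (coframe n R) n (\<lambda>j. of_real (lam j - c))"
      for c
      by (rule form11_eq_diag_form)
        (simp add: \<chi> \<omega> sum_distrib_left sum_subtractf[symmetric] algebra_simps)
    show "form11 n (\<lambda>i j. omega i j - of_real c * chi i j + chi i j)
        = diag_form (coframe n R) n (\<lambda>j. of_real (lam j - c + 1))" for c
      by (rule form11_eq_diag_form)
        (simp add: \<chi> \<omega> sum_distrib_left sum.distrib[symmetric] sum_subtractf[symmetric] algebra_simps)
  qed
qed

lemma G_form_le_scaled_pow:
  assumes "0 < \<theta>" "\<theta> < pi" "in_Gamma n chi omega \<theta>"
  shows "form_ge n n
    (form_scale (of_real (if n \<le> 1 then 1 else 1 / sin \<theta> ^ (2 * n + 1)))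
      (form_pow (form11 n (\<lambda>i j. omega i j - of_real (cot \<theta>) * chi i j + chi i j)) n))
    (G_form \<theta> n (form11 n omega) (form11 n chi))"
proof -
  define C where "C = (if n \<le> 1 then 1 else 1 / sin \<theta> ^ (2 * n + 1))"
  obtain lam \<rho> where cone: "\<forall>I\<subseteq>{..<n}. card I = n - 1 \<longrightarrow> (\<Sum>i\<in>I. arccot (lam i)) < \<theta>"
    and \<rho>: "\<And>j. pform_deg1 (\<rho> j)"
    and forms: "form11 n chi = diag_form \<rho> n (\<lambda>j. 1)"
      "form11 n omega = diag_form \<rho> n (\<lambda>j. of_real (lam j))"
      "\<And>c. form11 n (\<lambda>i j. omega i j - of_real c * chi i j) = diag_form \<rho> n (\<lambda>j. of_real (lam j - c))"
      "\<And>c. form11 n (\<lambda>i j. omega i j - of_real c * chi i j + chi i j)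
         = diag_form \<rho> n (\<lambda>j. of_real (lam j - c + 1))"
    using in_Gamma_diag_form[OF assms(3)] by blast
  have "form_ge n n
      (list_form \<rho> (index_lists n n) (\<lambda>xs. of_real (C * (\<Prod>j\<leftarrow>xs. lam j - cot \<theta> + 1))))
      (list_form \<rho> (index_lists n n) (\<lambda>xs. of_real (G_scalar \<theta> (\<Prod>j\<leftarrow>xs. of_real (lam j) + \<i>))))"
  proof (rule form_ge_list_form[OF finite_index_lists \<rho>])
    fix xs assume "xs \<in> index_lists n n" "distinct xs"
    then have "set xs \<subseteq> {..<n}" "card (set xs) = n"
      by (auto simp: index_lists_def distinct_card)
    then have "set xs = {..<n}" by (intro card_subset_eq) auto
    then show "G_scalar \<theta> (\<Prod>j\<leftarrow>xs. of_real (lam j) + \<i>) \<le> C * (\<Prod>j\<leftarrow>xs. lam j - cot \<theta> + 1)"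
      using G_scalar_le_of_arccot_sums[OF assms(1,2) cone] \<open>distinct xs\<close>
      by (simp add: C_def prod.distinct_set_conv_list[symmetric])
  qed
  then show ?thesis
    unfolding forms form_pow_diag_form G_form_diag_form form_scale_list_form C_def
    by (simp add: prod_list_map_of_real[symmetric])
qed

lemma P_form_ge_scaled_pow:
  assumes "0 < \<delta>" "\<theta> < pi" "in_Gamma n chi omega (\<theta> - \<delta>)" "k \<in> {1..n-1}"
  shows "form_ge n k
    (P_form \<theta> k (form11 n (\<lambda>i j. omega i j - of_real (cot \<theta>) * chi i j)) (form11 n chi))
    (form_scale (of_real (min (sin \<delta>) (sin \<theta>) * sin \<theta> ^ n))
      (form_pow (form11 n (\<lambda>i j. omega i j - of_real (cot \<theta>) * chi i j)) k))"
proof -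
  define \<epsilon> where "\<epsilon> = min (sin \<delta>) (sin \<theta>) * sin \<theta> ^ n"
  obtain lam \<rho> where cone: "\<forall>I\<subseteq>{..<n}. card I = n - 1 \<longrightarrow> (\<Sum>i\<in>I. arccot (lam i)) < \<theta> - \<delta>"
    and \<rho>: "\<And>j. pform_deg1 (\<rho> j)"
    and forms: "form11 n chi = diag_form \<rho> n (\<lambda>j. 1)"
      "form11 n omega = diag_form \<rho> n (\<lambda>j. of_real (lam j))"
      "\<And>c. form11 n (\<lambda>i j. omega i j - of_real c * chi i j) = diag_form \<rho> n (\<lambda>j. of_real (lam j - c))"
      "\<And>c. form11 n (\<lambda>i j. omega i j - of_real c * chi i j + chi i j)
         = diag_form \<rho> n (\<lambda>j. of_real (lam j - c + 1))"
    using in_Gamma_diag_form[OF assms(3)] by blast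
  have "form_ge n k
      (list_form \<rho> (index_lists n k) (\<lambda>xs. of_real (G_scalar \<theta> (\<Prod>j\<leftarrow>xs. of_real (lam j) + \<i>))))
      (list_form \<rho> (index_lists n k) (\<lambda>xs. of_real (\<epsilon> * (\<Prod>j\<leftarrow>xs. lam j - cot \<theta>))))"
  proof (rule form_ge_list_form[OF finite_index_lists \<rho>])
    fix xs assume "xs \<in> index_lists n k" "distinct xs"
    then have "set xs \<subseteq> {..<n}" "set xs \<noteq> {}" "card (set xs) \<le> n - 1"
      using assms(4) by (auto simp: index_lists_def distinct_card)
    then show "\<epsilon> * (\<Prod>j\<leftarrow>xs. lam j - cot \<theta>) \<le> G_scalar \<theta> (\<Prod>j\<leftarrow>xs. of_real (lam j) + \<i>)"
      using G_scalar_ge_of_arccot_sums[OF assms(1,2) _ _ _ cone] \<open>distinct xs\<close>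
      by (simp add: \<epsilon>_def prod.distinct_set_conv_list[symmetric])
  qed
  then show ?thesis
    unfolding forms P_form_def form_scale_diag_form form_add_diag_form form_pow_diag_form
      G_form_diag_form form_scale_list_form \<epsilon>_def
    by (simp add: prod_list_map_of_real[symmetric])
qed

theorem lemma2p6:
  fixes n :: nat and \<theta> :: real
  assumes "0 < \<theta>" and "\<theta> < pi"
  shows
   "(\<exists>C>0. \<forall>chi omega. posdef n chi \<and> hermitian n omega \<and> in_Gamma n chi omega \<theta> \<longrightarrow>
       form_ge n n
         (form_scale (of_real C)
            (form_pow (form11 n (\<lambda>i j. omega i j - of_real (cot \<theta>) * chi i j + chi i j)) n))
         (G_form \<theta> n (form11 n omega) (form11 n chi)))
  \<and> (\<forall>\<delta>. 0 < \<delta> \<and> \<delta> < \<theta> \<longrightarrow>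
       (\<exists>\<epsilon>>0. \<forall>chi omega. posdef n chi \<and> hermitian n omega \<and> in_Gamma n chi omega (\<theta> - \<delta>) \<longrightarrow>
          (let \<Omega> = form11 n (\<lambda>i j. omega i j - of_real (cot \<theta>) * chi i j)
           in \<forall>k\<in>{1..n-1}.
                form_ge n k (P_form \<theta> k \<Omega> (form11 n chi)) (form_scale (of_real \<epsilon>) (form_pow \<Omega> k)))))"
proof -
  have "0 < sin \<theta>" using assms by (rule sin_gt_zero)
  then have C: "0 < (if n \<le> 1 then 1 else 1 / sin \<theta> ^ (2 * n + 1))" by simp
  have \<epsilon>: "0 < min (sin \<delta>) (sin \<theta>) * sin \<theta> ^ n" if "0 < \<delta> \<and> \<delta> < \<theta>" for \<delta>
    using that assms by (simp add: sin_gt_zero)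
  show ?thesis
    unfolding Let_def
    using G_form_le_scaled_pow[OF assms] P_form_ge_scaled_pow[OF _ assms(2)] C \<epsilon> by blast
qed

end
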